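(* An idempotent semiring $S$ satisfies the identity $x+xyx+x\approx x$ if and only if it satisfies the identity $xz+xyz+xz\approx xz$.
   Context: An idempotent semiring is an algebra $(S,+,\cdot)$ with two binary operations such that $(S,+)$ and $(S,\cdot)$ are bands (associative, with $x+x=x$ and $xx=x$), and both distributive laws $x(y+z)=xy+xz$ and $(x+y)z=xz+yz$ hold; addition is not assumed commutative. *)

theory Defs
  imports Main
begin

text \<open>An idempotent semiring: two bands (associative idempotent operations) with
both distributive laws; addition need not be commutative. The structure is the
whole type 'a with operations add and mul.\<close>

definition band :: "('a \<Rightarrow> 'a \<Rightarrow> 'a) \<Rightarrow> bool" where
  "band f \<longleftrightarrow> (\<forall>x y z. f (f x y) z = f x (f y z)) \<and> (\<forall>x. f x x = x)"

definition idempotent_semiring :: "('a \<Rightarrow> 'a \<Rightarrow> 'a) \<Rightarrow> ('a \<Rightarrow> 'a \<Rightarrow> 'a) \<Rightarrow> bool" where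
  "idempotent_semiring add mul \<longleftrightarrow>
     band add \<and> band mul \<and>
     (\<forall>x y z. mul x (add y z) = add (mul x y) (mul x z)) \<and>
     (\<forall>x y z. mul (add x y) z = add (mul x z) (mul y z))"

end

theory Submission
  imports Defs
begin

text \<open>Write \<open>a \<sqsubseteq> b\<close> (\<open>absorbs\<close> below) for \<open>a + b + a = a\<close>; in a band this is a preorder, sums lie below
their summands, and it is preserved by additive maps, in particular by \<open>s \<mapsto> x s z\<close>.
The hypothesis says \<open>a \<sqsubseteq> a y a\<close>.  Taking \<open>a = x + z\<close>, the product \<open>(x + z) y (x + z)\<close>
expands to a sum containing \<open>x y z\<close>, so \<open>x + z \<sqsubseteq> x y z\<close>; applying \<open>s \<mapsto> x s z\<close> gives
\<open>x z \<sqsubseteq> x y z\<close>, which is the second identity.  The converse is the case \<open>z = x\<close>.\<close>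

definition absorbs :: "('a \<Rightarrow> 'a \<Rightarrow> 'a) \<Rightarrow> 'a \<Rightarrow> 'a \<Rightarrow> bool" where
  "absorbs f a b \<longleftrightarrow> f (f a b) a = a"

lemma
  assumes "band f"
  shows band_assoc: "f (f x y) z = f x (f y z)" and band_idem: "f x x = x"
  using assms by (simp_all add: band_def)

lemma absorbs_trans:
  assumes "band f" "absorbs f a b" "absorbs f b c"
  shows "absorbs f a c"
  using band_assoc[OF assms(1)] band_idem[OF assms(1)] assms(2,3) unfolding absorbs_def by metis

lemma
  assumes "band f"
  shows absorbs_sum_left: "absorbs f (f a b) a" and absorbs_sum_right: "absorbs f (f a b) b"
  using band_assoc[OF assms] band_idem[OF assms] unfolding absorbs_def by metis+

lemma absorbs_hom:
  assumes "\<And>a b. h (f a b) = f (h a) (h b)" "absorbs f a b"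
  shows "absorbs f (h a) (h b)"
  using assms unfolding absorbs_def by metis

lemma
  assumes "idempotent_semiring add mul"
  shows idempotent_semiring_add_band: "band add"
    and idempotent_semiring_mul_band: "band mul"
    and idempotent_semiring_distrib_left: "mul x (add y z) = add (mul x y) (mul x z)"
    and idempotent_semiring_distrib_right: "mul (add x y) z = add (mul x z) (mul y z)"
  using assms by (simp_all add: idempotent_semiring_def)

lemma absorbs_sandwich:
  assumes S: "idempotent_semiring add mul"
    and H: "\<And>a y. absorbs add a (mul (mul a y) a)"
  shows "absorbs add (mul x z) (mul (mul x y) z)"
proof -
  note distribs = idempotent_semiring_distrib_left[OF S] idempotent_semiring_distrib_right[OF S]
  note add_band = idempotent_semiring_add_band[OF S]
  have mul_assoc: "mul (mul a b) c = mul a (mul b c)" and mul_idem: "mul a a = a" for a b c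
    using idempotent_semiring_mul_band[OF S] by (simp_all add: band_assoc band_idem)
  let ?s = "add x z"
  have "mul (mul ?s y) ?s =
      add (add (mul (mul x y) x) (mul (mul z y) x)) (add (mul (mul x y) z) (mul (mul z y) z))"
    by (simp add: distribs)
  then have "absorbs add (mul (mul ?s y) ?s) (mul (mul x y) z)"
    using absorbs_trans[OF add_band absorbs_sum_right[OF add_band] absorbs_sum_left[OF add_band]]
    by simp
  then have "absorbs add ?s (mul (mul x y) z)"
    using absorbs_trans[OF add_band H] by blast
  then have "absorbs add (mul (mul x ?s) z) (mul (mul x (mul (mul x y) z)) z)"
    by (rule absorbs_hom[where h = "\<lambda>s. mul (mul x s) z", rotated]) (simp add: distribs)
  moreover have "mul (mul x ?s) z = mul x z"
    by (simp add: distribs mul_assoc mul_idem band_idem[OF add_band])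
  moreover have "mul (mul x (mul (mul x y) z)) z = mul (mul x y) z"
    by (metis mul_assoc mul_idem)
  ultimately show ?thesis by simp
qed

theorem lemma2p4:
  fixes add mul :: "'a \<Rightarrow> 'a \<Rightarrow> 'a"
  assumes "idempotent_semiring add mul"
  shows "(\<forall>x y. add (add x (mul (mul x y) x)) x = x) \<longleftrightarrow>
         (\<forall>x y z. add (add (mul x z) (mul (mul x y) z)) (mul x z) = mul x z)"
proof
  assume "\<forall>x y. add (add x (mul (mul x y) x)) x = x"
  then have "absorbs add (mul x z) (mul (mul x y) z)" for x y z
    by (intro absorbs_sandwich[OF assms]) (simp add: absorbs_def)
  then show "\<forall>x y z. add (add (mul x z) (mul (mul x y) z)) (mul x z) = mul x z"
    by (simp add: absorbs_def)
next
  assume "\<forall>x y z. add (add (mul x z) (mul (mul x y) z)) (mul x z) = mul x z"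
  then show "\<forall>x y. add (add x (mul (mul x y) x)) x = x"
    using band_idem[OF idempotent_semiring_mul_band[OF assms]] by metis
qed

end
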